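(* Let $X\subset\mathbb{R}^n$ be a finite set of points, $\epsilon\ge0$, and let $(F,G)$ be the output of the coefficient-normalized VCA or of the gradient-normalized VCA on input $(X,\epsilon)$, with degree-$t$ parts $F_t$. Then for every integer $\tau\ge 0$, $|F^\tau|=\sum_{t=0}^{\tau}|F_t|\le\binom{n+\tau}{n}$.
   Context: $\mathcal{R}_n=\mathbb{R}[x_1,\ldots,x_n]$. For $X=\{\boldsymbol x_1,\ldots,\boldsymbol x_N\}$ and $h\in\mathcal R_n$, $h(X)=(h(\boldsymbol x_1),\ldots,h(\boldsymbol x_N))^\top$; for an ordered finite set $H=\{h_1,\ldots,h_s\}$, $H(X)$ has columns $h_j(X)$; $H\boldsymbol w=\sum_jw_jh_j$ and $HW=\{H\boldsymbol w_1,\ldots\}$ for $W$ with columns $\boldsymbol w_i$. Normalization matrices: gradient, $\mathfrak N_{\mathrm g}(H;X)=\mathfrak n_{\mathrm g}(H;X)^\top\mathfrak n_{\mathrm g}(H;X)$ where $\mathfrak n_{\mathrm g}(H;X)$ has columns $\mathrm{vec}(\nabla h_j(X))$ and $\nabla h(X)$ is the $N\times n$ matrix of gradients of $h$ at the points; coefficient, $\mathfrak N_{\mathrm c}(H)=\mathfrak n_{\mathrm c}(H)^\top\mathfrak n_{\mathrm c}(H)$ where $\mathfrak n_{\mathrm c}(H)$ has as columns the coefficient vectors of the $h_j$. Normalized VCA with normalization matrix $\mathfrak N$ on input $(X,\epsilon)$: $F_0=\{m\}$ ($m$ a nonzero constant), $G_0=\emptyset$; for $t=1,2,\ldots$: (S1)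 $C_1^{\mathrm{pre}}=\{x_1,\ldots,x_n\}$, $C_t^{\mathrm{pre}}=\{pq:p\in F_1,q\in F_{t-1}\}$ for $t>1$; $C_t=C_t^{\mathrm{pre}}-F^{t-1}F^{t-1}(X)^\dagger C_t^{\mathrm{pre}}(X)$ with $F^{t-1}=F_0\cup\cdots\cup F_{t-1}$ and $\dagger$ the pseudo-inverse. (S2) Solve $C_t(X)^\top C_t(X)V=\mathfrak N(C_t)V\Lambda$ with generalized eigenvectors $\boldsymbol v_i$ and eigenvalues $\lambda_i$. (S3) $F_t=\{C_t\boldsymbol v_i:\sqrt{\lambda_i}>\epsilon\}$, $G_t=\{C_t\boldsymbol v_i:\sqrt{\lambda_i}\le\epsilon\}$; if $F_t=\emptyset$ output $F=F_0\cup\cdots\cup F_t$, $G=G_0\cup\cdots\cup G_t$; else continue. Gradient-normalized VCA uses $\mathfrak N=\mathfrak N_{\mathrm g}(\cdot;X)$, coefficient-normalized uses $\mathfrak N=\mathfrak N_{\mathrm c}$. $F_t$ is empty for $t$ beyond the termination step. *)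

theory Defs
  imports "HOL-Library.Poly_Mapping" "Jordan_Normal_Form.Matrix"
begin

type_synonym mpoly = "(nat \<Rightarrow>\<^sub>0 nat) \<Rightarrow>\<^sub>0 real"
type_synonym point = "nat \<Rightarrow> real"

definition pconst :: "real \<Rightarrow> mpoly" where
  "pconst c = Poly_Mapping.single 0 c"

definition pvar :: "nat \<Rightarrow> mpoly" where
  "pvar i = Poly_Mapping.single (Poly_Mapping.single i 1) 1"

definition peval :: "mpoly \<Rightarrow> point \<Rightarrow> real" where
  "peval p x = (\<Sum>a\<in>Poly_Mapping.keys p. Poly_Mapping.lookup p a * (\<Prod>i\<in>Poly_Mapping.keys a. x i ^ Poly_Mapping.lookup a i))"

definition pdiff_eval :: "mpoly \<Rightarrow> nat \<Rightarrow> point \<Rightarrow> real" where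
  "pdiff_eval p l x = (\<Sum>a\<in>Poly_Mapping.keys p. Poly_Mapping.lookup p a * (of_nat (Poly_Mapping.lookup a l) * x l ^ (Poly_Mapping.lookup a l - 1))
        * (\<Prod>i\<in>Poly_Mapping.keys a - {l}. x i ^ Poly_Mapping.lookup a i))"

definition evalmat :: "mpoly list \<Rightarrow> point list \<Rightarrow> real mat" where
  "evalmat H X = mat (length X) (length H) (\<lambda>(i,j). peval (H ! j) (X ! i))"

definition lincomb :: "mpoly list \<Rightarrow> real vec \<Rightarrow> mpoly" where
  "lincomb H w = (\<Sum>j<length H. pconst (w $ j) * H ! j)"

definition lincombs :: "mpoly list \<Rightarrow> real mat \<Rightarrow> mpoly list" where
  "lincombs H W = map (\<lambda>i. lincomb H (col W i)) [0..<dim_col W]"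

definition pinv :: "real mat \<Rightarrow> real mat" where
  "pinv A = (THE B. B \<in> carrier_mat (dim_col A) (dim_row A) \<and> A * B * A = A \<and> B * A * B = B
      \<and> transpose_mat (A * B) = A * B \<and> transpose_mat (B * A) = B * A)"

text \<open>Gradient normalization N_g(H;X) = n_g^T n_g, where column j of n_g is vec(grad h_j(X));
  entry (i,j) is the sum over points and coordinates of products of partial derivatives.\<close>
definition Ng :: "nat \<Rightarrow> point list \<Rightarrow> mpoly list \<Rightarrow> real mat" where
  "Ng n X H = mat (length H) (length H) (\<lambda>(i,j).
      \<Sum>k<length X. \<Sum>l<n. pdiff_eval (H ! i) l (X ! k) * pdiff_eval (H ! j) l (X ! k))"

text \<open>Coefficient normalization N_c(H) = n_c^T n_c, columns of n_c = coefficient vectors.\<close>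
definition Nc :: "mpoly list \<Rightarrow> real mat" where
  "Nc H = mat (length H) (length H) (\<lambda>(i,j).
      \<Sum>a\<in>(\<Union>h\<in>set H. Poly_Mapping.keys h). Poly_Mapping.lookup (H ! i) a * Poly_Mapping.lookup (H ! j) a)"

definition Cpre :: "nat \<Rightarrow> mpoly list \<Rightarrow> mpoly list \<Rightarrow> nat \<Rightarrow> mpoly list" where
  "Cpre n F1 Fprev t = (if t = 1 then map pvar [0..<n]
       else remdups [p * q. p \<leftarrow> F1, q \<leftarrow> Fprev])"

definition Cset :: "point list \<Rightarrow> mpoly list \<Rightarrow> mpoly list \<Rightarrow> mpoly list" where
  "Cset X Fall Cp = (let W = pinv (evalmat Fall X) * evalmat Cp X;
                         P = lincombs Fall W
                     in map (\<lambda>j. Cp ! j - P ! j) [0..<length Cp])"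

definition vca_split :: "(mpoly list \<Rightarrow> real mat) \<Rightarrow> point list \<Rightarrow> real \<Rightarrow> mpoly list
     \<Rightarrow> mpoly list \<Rightarrow> mpoly list \<Rightarrow> bool" where
  "vca_split Nf X eps C Ft Gt \<longleftrightarrow>
     (\<exists>V lam. V \<in> carrier_mat (length C) (length lam) \<and>
       transpose_mat (evalmat C X) * evalmat C X * V
          = Nf C * V * mat (length lam) (length lam) (\<lambda>(i,j). if i = j then lam ! i else 0) \<and>
       transpose_mat V * Nf C * V = 1\<^sub>m (length lam) \<and>
       Ft = [lincomb C (col V i). i \<leftarrow> [0..<length lam], sqrt (lam ! i) > eps] \<and>
       Gt = [lincomb C (col V i). i \<leftarrow> [0..<length lam], \<not> sqrt (lam ! i) > eps])"

definition vca_run :: "(mpoly list \<Rightarrow> real mat) \<Rightarrow> nat \<Rightarrow> point list \<Rightarrow> real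
     \<Rightarrow> (nat \<Rightarrow> mpoly list) \<Rightarrow> (nat \<Rightarrow> mpoly list) \<Rightarrow> bool" where
  "vca_run Nf n X eps F G \<longleftrightarrow>
     (\<exists>m T. m \<noteq> 0 \<and> T \<ge> 1 \<and> F 0 = [pconst m] \<and> G 0 = [] \<and>
       (\<forall>t. 1 \<le> t \<and> t \<le> T \<longrightarrow>
          vca_split Nf X eps
            (Cset X (concat (map F [0..<t])) (Cpre n (F 1) (F (t - 1)) t)) (F t) (G t)) \<and>
       (\<forall>t. 1 \<le> t \<and> t < T \<longrightarrow> F t \<noteq> []) \<and> F T = [] \<and>
       (\<forall>t > T. F t = [] \<and> G t = []))"

end

(*
  Write <p, q>_X for the sum of p(x) q(x) over the points x of X. The generalized eigenvectors
  of step (S2), normalized by V^T N V = I, make the polynomials of each F_t pairwise orthogonal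
  for this form, with squared norms lambda_i > eps^2 >= 0; the projection of step (S1) makes
  C_t, and hence F_t, orthogonal to all earlier F_s. Thus a polynomial cannot occur in two of
  the F_t (it would be orthogonal to itself), and F_0, ..., F_tau together form an orthogonal
  family of nonzero vectors, which is linearly independent. All of it lies in the space of
  polynomials in the n variables of degree at most tau, of dimension C(n + tau, n).

  Only the size of the normalization matrix enters, so the argument covers both normalizations. If X is empty, every F_t with t >= 1 is empty.
*)

theory Submission
  imports
    Defs
    "Jordan_Normal_Form.Gauss_Jordan_Elimination"
    "HOL-Library.Multiset"
    "HOL-Analysis.Finite_Function_Topology"
begin

section \<open>Generalized and Moore-Penrose inverses\<close>

lemma mult_mat_assoc:
  fixes A :: "'a :: semiring_0 mat"
  shows "dim_col A = dim_row B \<Longrightarrow> dim_col B = dim_row C \<Longrightarrow> A * B * C = A * (B * C)"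
  by (rule assoc_mult_mat[of A "dim_row A" "dim_col A" B "dim_col B" C "dim_col C"]) auto

lemma mult_minus_distrib_mat':
  fixes A :: "'a :: ring mat"
  shows "dim_col A = dim_row B \<Longrightarrow> dim_row B = dim_row C \<Longrightarrow> dim_col B = dim_col C
    \<Longrightarrow> A * (B - C) = A * B - A * C"
  by (rule mult_minus_distrib_mat[of A "dim_row A" "dim_col A" B "dim_col B"]) auto

lemma minus_mult_distrib_mat':
  fixes A :: "'a :: ring mat"
  shows "dim_row A = dim_row B \<Longrightarrow> dim_col A = dim_col B \<Longrightarrow> dim_col A = dim_row C
    \<Longrightarrow> (A - B) * C = A * C - B * C"
  by (rule minus_mult_distrib_mat[of A "dim_row A" "dim_col A" B C "dim_col C"]) auto

lemma transpose_mult':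
  fixes A :: "'a :: comm_semiring_0 mat"
  shows "dim_col A = dim_row B \<Longrightarrow> transpose_mat (A * B) = transpose_mat B * transpose_mat A"
  by (rule transpose_mult[of A "dim_row A" "dim_col A" B "dim_col B"]) auto

lemma index_mult_mat_sum:
  "i < dim_row A \<Longrightarrow> j < dim_col B \<Longrightarrow> dim_col A = dim_row B \<Longrightarrow>
    (A * B) $$ (i, j) = (\<Sum>k<dim_col A. A $$ (i, k) * B $$ (k, j))"
  by (simp add: scalar_prod_def lessThan_atLeast0)

lemma row_echelon_generalized_inverse:
  fixes C :: "'a :: field mat"
  assumes C: "C \<in> carrier_mat nr nc" and ref: "row_echelon_form C"
  shows "\<exists>G \<in> carrier_mat nc nr. C * G * C = C"
proof -
  from ref obtain f where "pivot_fun C f nc" unfolding row_echelon_form_def using C by auto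
  note pivot = pivot_funD[OF _ this, of nr]
  \<comment> \<open>\<open>G\<close> maps row \<open>i\<close> to its pivot column \<open>f i\<close>,
    so \<open>C * G\<close> projects onto the nonzero rows.\<close>
  define G where "G = mat nc nr (\<lambda>(j, i). if f i < nc \<and> j = f i then 1 else (0::'a))"
  have G: "G \<in> carrier_mat nc nr" unfolding G_def by auto
  have CG: "C * G = mat nr nr (\<lambda>(k, i). if k = i \<and> f i < nc then 1 else 0)"
  proof (rule eq_matI)
    fix k i assume "k < dim_row (mat nr nr (\<lambda>(k, i). if k = i \<and> f i < nc then 1 else (0::'a)))"
      and "i < dim_col (mat nr nr (\<lambda>(k, i). if k = i \<and> f i < nc then 1 else (0::'a)))"
    hence k: "k < nr" and i: "i < nr" by auto
    have "(C * G) $$ (k, i) = (\<Sum>j<nc. C $$ (k, j) * G $$ (j, i))"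
      using k i C G by (subst index_mult_mat_sum) auto
    also have "\<dots> = (if f i < nc then C $$ (k, f i) else 0)"
      using i unfolding G_def by (auto simp: if_distrib cong: if_cong)
    also have "\<dots> = (if k = i \<and> f i < nc then 1 else 0)"
      using pivot(4)[OF _ i] pivot(5)[OF _ i _ k] C by auto
    finally show "(C * G) $$ (k, i) = mat nr nr (\<lambda>(k, i). if k = i \<and> f i < nc then 1 else (0::'a)) $$ (k, i)"
      using k i by simp
  qed (use C G in auto)
  have "C * G * C = C"
  proof (rule eq_matI)
    fix k l assume "k < dim_row C" "l < dim_col C"
    hence k: "k < nr" and l: "l < nc" using C by auto
    have "(C * G * C) $$ (k, l) = (\<Sum>i<nr. (if k = i \<and> f i < nc then 1 else 0) * C $$ (i, l))"
      unfolding CG using k l C by (subst index_mult_mat_sum) auto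
    also have "\<dots> = (\<Sum>i<nr. if i = k then (if f k < nc then C $$ (k, l) else 0) else 0)"
      by (rule sum.cong) auto
    also have "\<dots> = (if f k < nc then C $$ (k, l) else 0)"
      using k by simp
    also have "\<dots> = C $$ (k, l)"
      using pivot(1)[OF _ k] pivot(2)[OF _ k, of l] l C by (cases "f k < nc") auto
    finally show "(C * G * C) $$ (k, l) = C $$ (k, l)" .
  qed (use C G in auto)
  with G show ?thesis by blast
qed

lemma generalized_inverse_exists:
  fixes A :: "'a :: field mat"
  assumes A: "A \<in> carrier_mat nr nc"
  shows "\<exists>G \<in> carrier_mat nc nr. A * G * A = A"
proof -
  note gj = gauss_jordan_single[OF A refl]
  define C where "C = gauss_jordan_single A"
  have C: "C \<in> carrier_mat nr nc" using gj(2) unfolding C_def .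
  from gj(4) obtain P Q where CP: "C = P * A" and P: "P \<in> carrier_mat nr nr"
    and Q: "Q \<in> carrier_mat nr nr" and QP: "Q * P = 1\<^sub>m nr" and PQ: "P * Q = 1\<^sub>m nr"
    unfolding C_def by blast
  obtain G where G: "G \<in> carrier_mat nc nr" and CGC: "C * G * C = C"
    using row_echelon_generalized_inverse[OF C gj(3)[folded C_def]] by blast
  have AQC: "A = Q * C"
    using QP Q P A by (simp add: CP assoc_mult_mat[symmetric, of Q nr nr P nr A nc])
  have "A * (G * P) * A = Q * (C * G * ((P * Q) * C))"
    using AQC Q P G C by (simp add: mult_mat_assoc carrier_matD)
  also have "\<dots> = A"
    using PQ CGC AQC C by simp
  finally show ?thesis
    using G P by (intro bexI[of _ "G * P"]) auto
qed

lemma transpose_mult_self_eq_0: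
  fixes D :: "real mat"
  assumes D: "D \<in> carrier_mat nr nc" and z: "transpose_mat D * D = 0\<^sub>m nc nc"
  shows "D = 0\<^sub>m nr nc"
proof (rule eq_matI)
  fix i j assume "i < dim_row (0\<^sub>m nr nc :: real mat)" "j < dim_col (0\<^sub>m nr nc :: real mat)"
  hence i: "i < nr" and j: "j < nc" by auto
  have "(\<Sum>k<nr. D $$ (k, j) * D $$ (k, j)) = (transpose_mat D * D) $$ (j, j)"
    using D j by (subst index_mult_mat_sum) auto
  also have "\<dots> = 0" using z j by simp
  finally have "\<forall>k\<in>{..<nr}. D $$ (k, j) * D $$ (k, j) = 0"
    by (subst (asm) sum_nonneg_eq_0_iff) auto
  thus "D $$ (i, j) = 0\<^sub>m nr nc $$ (i, j)" using i j by auto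
qed (use D in auto)

lemma gram_generalized_inverse:
  fixes A :: "real mat"
  assumes A: "A \<in> carrier_mat nr nc" and G: "G \<in> carrier_mat nc nc"
    and g: "transpose_mat A * A * G * (transpose_mat A * A) = transpose_mat A * A"
  shows "A * G * (transpose_mat A * A) = A"
    and "transpose_mat (A * G * transpose_mat A) = A * G * transpose_mat A"
proof -
  let ?M = "transpose_mat A * A"
  have dims: "dim_row A = nr" "dim_col A = nc" "dim_row G = nc" "dim_col G = nc" using A G by auto
  have Mt: "transpose_mat ?M = ?M" using dims by (simp add: transpose_mult')
  define D where "D = A * G * ?M - A"
  have D: "D \<in> carrier_mat nr nc" unfolding D_def using A G by auto
  have "transpose_mat A * D = ?M * G * ?M - ?M"
    unfolding D_def using dims by (simp add: mult_minus_distrib_mat' mult_mat_assoc)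
  hence AD: "transpose_mat A * D = 0\<^sub>m nc nc" using g A by (simp add: minus_r_inv_mat[of _ nc nc])
  have "transpose_mat D = ?M * transpose_mat G * transpose_mat A - transpose_mat A"
    unfolding D_def using A G Mt dims
    by (subst transpose_minus[of _ nr nc]) (auto simp: transpose_mult' mult_mat_assoc)
  hence "transpose_mat D * D = ?M * transpose_mat G * (transpose_mat A * D) - transpose_mat A * D"
    using dims D by (simp add: minus_mult_distrib_mat' mult_mat_assoc carrier_matD)
  also have "\<dots> = 0\<^sub>m nc nc" unfolding AD using dims by simp
  finally have "D = 0\<^sub>m nr nc" using transpose_mult_self_eq_0[OF D] by blast
  show AGM: "A * G * ?M = A"
  proof (rule eq_matI)
    fix i j assume "i < dim_row A" "j < dim_col A"
    hence ij: "i < nr" "j < nc" using dims by auto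
    hence "D $$ (i, j) = 0" using \<open>D = 0\<^sub>m nr nc\<close> by simp
    thus "(A * G * ?M) $$ (i, j) = A $$ (i, j)" unfolding D_def using ij dims by simp
  qed (use dims in auto)
  have At: "transpose_mat A = ?M * transpose_mat G * transpose_mat A"
    using arg_cong[OF AGM, of transpose_mat] dims Mt by (simp add: transpose_mult' mult_mat_assoc)
  have "A * G * transpose_mat A = (A * G * ?M) * transpose_mat G * transpose_mat A"
    by (subst At) (use dims in \<open>simp add: mult_mat_assoc\<close>)
  also have "\<dots> = A * transpose_mat G * transpose_mat A" using AGM by simp
  finally show "transpose_mat (A * G * transpose_mat A) = A * G * transpose_mat A"
    using dims by (simp add: transpose_mult' mult_mat_assoc)
qed

definition moore_penrose :: "real mat \<Rightarrow> real mat \<Rightarrow> bool" where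
  "moore_penrose A B \<longleftrightarrow> B \<in> carrier_mat (dim_col A) (dim_row A) \<and> A * B * A = A \<and> B * A * B = B
      \<and> transpose_mat (A * B) = A * B \<and> transpose_mat (B * A) = B * A"

lemma moore_penrose_exists: "\<exists>B. moore_penrose A B"
proof -
  define nr nc where "nr = dim_row A" and "nc = dim_col A"
  have A: "A \<in> carrier_mat nr nc" and At: "transpose_mat A \<in> carrier_mat nc nr"
    unfolding nr_def nc_def by auto
  obtain G where G: "G \<in> carrier_mat nc nc"
    and GA: "transpose_mat A * A * G * (transpose_mat A * A) = transpose_mat A * A"
    using generalized_inverse_exists[of "transpose_mat A * A" nc nc] A by auto
  note AG = gram_generalized_inverse[OF A G GA]
  obtain H where H: "H \<in> carrier_mat nr nr"
    and HA: "A * transpose_mat A * H * (A * transpose_mat A) = A * transpose_mat A"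
    using generalized_inverse_exists[of "A * transpose_mat A" nr nr] A by auto
  note AH = gram_generalized_inverse[OF At H, unfolded transpose_transpose, OF HA]
  have dims: "dim_row A = nr" "dim_col A = nc" "dim_row G = nc" "dim_col G = nc"
    "dim_row H = nr" "dim_col H = nr"
    using A G H by auto
  have AAHA: "A * transpose_mat A * H * A = A"
  proof -
    have "A * transpose_mat A * H * A = A * (transpose_mat (transpose_mat A * H * A))"
      using AH(2) dims by (simp add: transpose_mult' mult_mat_assoc)
    also have "\<dots> = transpose_mat (transpose_mat A * H * (A * transpose_mat A))"
      using dims by (simp add: transpose_mult' mult_mat_assoc)
    also have "\<dots> = A" using AH(1) by simp
    finally show ?thesis .
  qed
  \<comment> \<open>The classical formula \<open>A\<^sup>+ = A\<^sup>T (A A\<^sup>T)\<^sup>- A (A\<^sup>T A)\<^sup>- A\<^sup>T\<close>,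
    valid for arbitrary generalized inverses.\<close>
  define B where "B = transpose_mat A * H * A * G * transpose_mat A"
  have B: "B \<in> carrier_mat nc nr" unfolding B_def using A G H by auto
  have AB: "A * B = A * G * transpose_mat A"
  proof -
    have "A * B = (A * transpose_mat A * H * A) * G * transpose_mat A"
      unfolding B_def using dims by (simp add: mult_mat_assoc)
    thus ?thesis using AAHA by simp
  qed
  have BA: "B * A = transpose_mat A * H * A"
  proof -
    have "B * A = transpose_mat A * H * (A * G * (transpose_mat A * A))"
      unfolding B_def using dims by (simp add: mult_mat_assoc)
    thus ?thesis using AG(1) dims by (simp add: mult_mat_assoc)
  qed
  have "A * B * A = A"
    unfolding AB using AG(1) dims by (simp add: mult_mat_assoc)
  moreover have "B * A * B = B"
  proof -
    have "B * A * B = transpose_mat A * H * A * B" using BA by simp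
    also have "\<dots> = transpose_mat A * H * (A * transpose_mat A * H * A) * G * transpose_mat A"
      unfolding B_def using dims by (simp add: mult_mat_assoc)
    finally show ?thesis using AAHA unfolding B_def by simp
  qed
  moreover have "transpose_mat (A * B) = A * B" unfolding AB using AG(2) .
  moreover have "transpose_mat (B * A) = B * A" unfolding BA using AH(2) .
  ultimately show ?thesis using B unfolding moore_penrose_def nr_def nc_def by blast
qed

lemma moore_penrose_unique:
  assumes b: "moore_penrose A B" and c: "moore_penrose A C"
  shows "B = C"
proof -
  have dims: "dim_row B = dim_col A" "dim_col B = dim_row A" "dim_row C = dim_col A" "dim_col C = dim_row A"
    using b c unfolding moore_penrose_def by auto
  have b1: "A * B * A = A" "B * A * B = B" "transpose_mat (A * B) = A * B" "transpose_mat (B * A) = B * A"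
    using b unfolding moore_penrose_def by auto
  have c1: "A * C * A = A" "C * A * C = C" "transpose_mat (A * C) = A * C" "transpose_mat (C * A) = C * A"
    using c unfolding moore_penrose_def by auto
  have At1: "transpose_mat A = transpose_mat A * (A * C)"
  proof -
    have "transpose_mat A = transpose_mat (A * C * A)" using c1 by simp
    also have "\<dots> = transpose_mat A * transpose_mat (A * C)" using dims by (simp add: transpose_mult')
    finally show ?thesis using c1 by simp
  qed
  have At2: "transpose_mat A = (B * A) * transpose_mat A"
  proof -
    have "transpose_mat A = transpose_mat (A * B * A)" using b1 by simp
    also have "\<dots> = transpose_mat (B * A) * transpose_mat A" using dims by (simp add: transpose_mult' mult_mat_assoc)
    finally show ?thesis using b1 by simp
  qed
  have "B = B * transpose_mat (A * B)" using b1 dims by (simp add: mult_mat_assoc)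
  also have "\<dots> = B * transpose_mat B * transpose_mat A" using dims by (simp add: transpose_mult' mult_mat_assoc)
  also have "\<dots> = B * transpose_mat B * (transpose_mat A * (A * C))" using At1 by simp
  also have "\<dots> = B * transpose_mat (A * B) * A * C" using dims by (simp add: transpose_mult' mult_mat_assoc)
  also have "\<dots> = B * A * C" using b1 dims by (simp add: mult_mat_assoc)
  finally have BC: "B = B * A * C" .
  have "C = transpose_mat (C * A) * C" using c1 dims by (simp add: mult_mat_assoc)
  also have "\<dots> = transpose_mat A * transpose_mat C * C" using dims by (simp add: transpose_mult' mult_mat_assoc)
  also have "\<dots> = B * A * transpose_mat A * transpose_mat C * C" using At2 by simp
  also have "\<dots> = B * A * transpose_mat (C * A) * C" using dims by (simp add: transpose_mult' mult_mat_assoc)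
  also have "\<dots> = B * A * C" using c1 dims by (simp add: mult_mat_assoc)
  finally show ?thesis using BC by simp
qed

lemma pinv_moore_penrose: "moore_penrose A (pinv A)"
proof -
  have "\<exists>!B. moore_penrose A B" using moore_penrose_exists moore_penrose_unique by blast
  thus ?thesis unfolding pinv_def using theI'[of "moore_penrose A"] unfolding moore_penrose_def by blast
qed

lemma pinv_carrier: "pinv A \<in> carrier_mat (dim_col A) (dim_row A)"
  using pinv_moore_penrose unfolding moore_penrose_def by blast

lemma transpose_mult_pinv: "transpose_mat A * A * pinv A = transpose_mat A"
proof -
  have p: "A * pinv A * A = A" "transpose_mat (A * pinv A) = A * pinv A"
    using pinv_moore_penrose unfolding moore_penrose_def by auto
  have "transpose_mat A = transpose_mat (A * pinv A * A)" using p by simp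
  also have "\<dots> = transpose_mat A * (A * pinv A)"
    using pinv_carrier[of A] p(2) by (simp add: transpose_mult')
  also have "\<dots> = transpose_mat A * A * pinv A"
    using pinv_carrier[of A] by (simp add: mult_mat_assoc)
  finally show ?thesis by simp
qed

section \<open>Polynomials as a real vector space\<close>

lemma independent_if_pairwise_orthogonal:
  fixes B :: "'a :: real_vector \<Rightarrow> 'a \<Rightarrow> real"
  assumes lin: "\<And>u. linear (B u)"
    and orth: "\<And>u v. u \<in> S \<Longrightarrow> v \<in> S \<Longrightarrow> u \<noteq> v \<Longrightarrow> B u v = 0"
    and nondeg: "\<And>u. u \<in> S \<Longrightarrow> B u u \<noteq> 0"
  shows "independent S"
proof
  assume "dependent S"
  then obtain T c v where T: "finite T" "T \<subseteq> S" and sum0: "(\<Sum>w\<in>T. c w *\<^sub>R w) = 0"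
    and v: "v \<in> T" "c v \<noteq> 0"
    unfolding dependent_explicit by blast
  have "0 = B v (\<Sum>w\<in>T. c w *\<^sub>R w)"
    using sum0 linear_0[OF lin] by simp
  also have "\<dots> = (\<Sum>w\<in>T. c w * B v w)"
    by (simp add: linear_sum[OF lin] linear_scale[OF lin])
  also have "\<dots> = (\<Sum>w\<in>T. if w = v then c v * B v v else 0)"
    by (rule sum.cong) (use T v orth in auto)
  also have "\<dots> = c v * B v v"
    using T v by simp
  finally show False
    using v T nondeg by auto
qed

lemma lookup_scaleR_poly_mapping:
  "Poly_Mapping.lookup (c *\<^sub>R p) a = c *\<^sub>R Poly_Mapping.lookup p a"
  unfolding scaleR_poly_mapping_def
  by (subst Abs_poly_mapping_inverse)
    (auto intro: finite_subset[OF _ finite_keys[of p]] simp: in_keys_iff)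

lemma keys_scaleR_poly_mapping: "Poly_Mapping.keys (c *\<^sub>R p) \<subseteq> Poly_Mapping.keys p"
  by (auto simp: in_keys_iff lookup_scaleR_poly_mapping)

lemma pconst_mult_eq_scaleR: "pconst c * p = c *\<^sub>R p"
  by (rule poly_mapping_eqI)
    (simp add: pconst_def lookup_scaleR_poly_mapping mult_map_scale_conv_mult[symmetric]
      map.rep_eq when_def)

lemma peval_eq_sum_superset:
  assumes "finite S" "Poly_Mapping.keys p \<subseteq> S"
  shows "peval p x = (\<Sum>a\<in>S. Poly_Mapping.lookup p a * (\<Prod>i\<in>Poly_Mapping.keys a. x i ^ Poly_Mapping.lookup a i))"
  unfolding peval_def
  by (rule sum.mono_neutral_left) (use assms in \<open>auto simp: in_keys_iff\<close>)

lemma linear_peval: "linear (\<lambda>p. peval p x)"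
proof (rule linearI)
  fix p q :: mpoly
  let ?S = "Poly_Mapping.keys p \<union> Poly_Mapping.keys q"
  have "Poly_Mapping.keys (p + q) \<subseteq> ?S" by (rule keys_add)
  then show "peval (p + q) x = peval p x + peval q x"
    by (simp add: peval_eq_sum_superset[of ?S] lookup_add distrib_right sum.distrib)
next
  fix c :: real and p :: mpoly
  show "peval (c *\<^sub>R p) x = c *\<^sub>R peval p x"
    using keys_scaleR_poly_mapping[of c p]
    by (simp add: peval_eq_sum_superset[of "Poly_Mapping.keys p"] lookup_scaleR_poly_mapping
        sum_distrib_left mult.assoc)
qed

lemma peval_pconst: "peval (pconst c) x = c"
  unfolding peval_def pconst_def by auto

lemma lincomb_eq_sum: "lincomb H w = (\<Sum>j<length H. w $ j *\<^sub>R H ! j)"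
  unfolding lincomb_def pconst_mult_eq_scaleR ..

lemma lincomb_in_span: "lincomb H w \<in> span (set H)"
  unfolding lincomb_eq_sum by (intro span_sum span_scale span_base) auto

lemma peval_lincomb: "peval (lincomb H w) x = (\<Sum>j<length H. w $ j * peval (H ! j) x)"
  unfolding lincomb_eq_sum by (simp add: linear_sum[OF linear_peval] linear_scale[OF linear_peval])

definition eval_inner :: "point list \<Rightarrow> mpoly \<Rightarrow> mpoly \<Rightarrow> real" where
  "eval_inner X p q = (\<Sum>k<length X. peval p (X ! k) * peval q (X ! k))"

lemma eval_inner_commute: "eval_inner X p q = eval_inner X q p"
  unfolding eval_inner_def by (simp add: mult.commute)

lemma linear_eval_inner: "linear (eval_inner X p)"
  by (rule linearI)
    (simp_all add: eval_inner_def linear_add[OF linear_peval] linear_scale[OF linear_peval]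
      distrib_left sum.distrib sum_distrib_left mult.left_commute)

lemma eval_inner_pconst: "eval_inner X (pconst c) (pconst c) = real (length X) * c\<^sup>2"
  unfolding eval_inner_def by (simp add: peval_pconst power2_eq_square)

section \<open>Polynomials of bounded degree\<close>

definition exponents_le :: "nat \<Rightarrow> nat \<Rightarrow> (nat \<Rightarrow>\<^sub>0 nat) set" where
  "exponents_le n d = {a. Poly_Mapping.keys a \<subseteq> {..<n} \<and> (\<Sum>i<n. Poly_Mapping.lookup a i) \<le> d}"

definition polys_deg_le :: "nat \<Rightarrow> nat \<Rightarrow> mpoly set" where
  "polys_deg_le n d = {p. Poly_Mapping.keys p \<subseteq> exponents_le n d}"

lemma exponents_le_mono: "d \<le> d' \<Longrightarrow> exponents_le n d \<subseteq> exponents_le n d'"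
  unfolding exponents_le_def by auto

lemma add_mem_exponents_le:
  "a \<in> exponents_le n d \<Longrightarrow> b \<in> exponents_le n d' \<Longrightarrow> a + b \<in> exponents_le n (d + d')"
  unfolding exponents_le_def using keys_add[of a b] by (auto simp: lookup_add sum.distrib)

lemma exponents_le_inj_multisets:
  "\<exists>g. inj_on g (exponents_le n d) \<and> g ` exponents_le n d \<subseteq> multisets_of_size {0..n} d"
proof -
  \<comment> \<open>Stars and bars: \<open>a\<^sub>i\<close> copies of each \<open>i < n\<close>,
    and the slack \<open>d - |a|\<close> as copies of \<open>n\<close>.\<close>
  define g where "g a = (\<Sum>i<n. replicate_mset (Poly_Mapping.lookup a i) i)
      + replicate_mset (d - (\<Sum>i<n. Poly_Mapping.lookup a i)) n" for a
  have count_g: "count (g a) j = Poly_Mapping.lookup a j" if "j < n" for a j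
  proof -
    have "count (g a) j = (\<Sum>i<n. if i = j then Poly_Mapping.lookup a j else 0)"
      unfolding g_def using that by (auto simp: count_sum intro!: sum.cong)
    also have "\<dots> = Poly_Mapping.lookup a j" using that by simp
    finally show ?thesis .
  qed
  have "inj_on g (exponents_le n d)"
  proof (rule inj_onI)
    fix a b assume a: "a \<in> exponents_le n d" and b: "b \<in> exponents_le n d" and "g a = g b"
    show "a = b"
    proof (rule poly_mapping_eqI)
      fix j show "Poly_Mapping.lookup a j = Poly_Mapping.lookup b j"
      proof (cases "j < n")
        case True thus ?thesis using count_g[of j a] count_g[of j b] \<open>g a = g b\<close> by simp
      next
        case False
        hence "j \<notin> Poly_Mapping.keys a" "j \<notin> Poly_Mapping.keys b"
          using a b unfolding exponents_le_def by auto
        thus ?thesis by (simp add: in_keys_iff)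
      qed
    qed
  qed
  moreover have "g ` exponents_le n d \<subseteq> multisets_of_size {0..n} d"
    unfolding exponents_le_def multisets_of_size_def g_def by (auto simp: set_mset_sum split: if_splits)
  ultimately show ?thesis by blast
qed

lemma finite_exponents_le: "finite (exponents_le n d)"
  using exponents_le_inj_multisets[of n d]
  by (metis finite_imageD finite_multisets_of_size finite_atLeastAtMost finite_subset)

lemma card_exponents_le: "card (exponents_le n d) \<le> (n + d) choose n"
proof -
  obtain g where "inj_on g (exponents_le n d)" "g ` exponents_le n d \<subseteq> multisets_of_size {0..n} d"
    using exponents_le_inj_multisets by blast
  then have "card (exponents_le n d) \<le> card (multisets_of_size {0..n} d)"
    by (intro card_inj_on_le) auto
  also have "\<dots> = (n + d) choose n"
    by (simp add: card_multisets_of_size binomial_symmetric[of d "n + d"])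
  finally show ?thesis .
qed

lemma subspace_polys_deg_le: "subspace (polys_deg_le n d)"
  unfolding subspace_def polys_deg_le_def
proof (intro conjI ballI allI)
  fix p q :: mpoly
  assume "p \<in> {p. Poly_Mapping.keys p \<subseteq> exponents_le n d}" "q \<in> {p. Poly_Mapping.keys p \<subseteq> exponents_le n d}"
  then show "p + q \<in> {p. Poly_Mapping.keys p \<subseteq> exponents_le n d}"
    using keys_add[of p q] by blast
next
  fix c :: real and p :: mpoly
  assume "p \<in> {p. Poly_Mapping.keys p \<subseteq> exponents_le n d}"
  then show "c *\<^sub>R p \<in> {p. Poly_Mapping.keys p \<subseteq> exponents_le n d}"
    using keys_scaleR_poly_mapping[of c p] by blast
qed simp

lemma polys_deg_le_mono: "d \<le> d' \<Longrightarrow> polys_deg_le n d \<subseteq> polys_deg_le n d'"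
  unfolding polys_deg_le_def using exponents_le_mono by blast

lemma times_mem_polys_deg_le:
  "p \<in> polys_deg_le n d \<Longrightarrow> q \<in> polys_deg_le n d' \<Longrightarrow> p * q \<in> polys_deg_le n (d + d')"
  unfolding polys_deg_le_def using keys_mult[of p q] add_mem_exponents_le by blast

lemma pconst_mem_polys_deg_le: "pconst c \<in> polys_deg_le n 0"
  unfolding polys_deg_le_def exponents_le_def pconst_def by auto

lemma pvar_mem_polys_deg_le: "i < n \<Longrightarrow> pvar i \<in> polys_deg_le n 1"
  unfolding polys_deg_le_def exponents_le_def pvar_def
  by (auto simp: lookup_single when_def sum.delta)

lemma polys_deg_le_subset_span:
  "polys_deg_le n d \<subseteq> span ((\<lambda>a. Poly_Mapping.single a 1) ` exponents_le n d)"
proof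
  fix p assume p: "p \<in> polys_deg_le n d"
  have "(\<Sum>a\<in>Poly_Mapping.keys p. Poly_Mapping.lookup p a * (1 when a = b))
      = Poly_Mapping.lookup p b" for b
  proof -
    have "(\<Sum>a\<in>Poly_Mapping.keys p. Poly_Mapping.lookup p a * (1 when a = b))
        = (\<Sum>a\<in>Poly_Mapping.keys p. if a = b then Poly_Mapping.lookup p b else 0)"
      by (rule sum.cong) (auto simp: when_def)
    also have "\<dots> = Poly_Mapping.lookup p b" by (simp add: in_keys_iff)
    finally show ?thesis .
  qed
  then have "p = (\<Sum>a\<in>Poly_Mapping.keys p. Poly_Mapping.lookup p a *\<^sub>R Poly_Mapping.single a 1)"
    by (intro poly_mapping_eqI) (simp add: lookup_sum lookup_scaleR_poly_mapping lookup_single)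
  also have "\<dots> \<in> span ((\<lambda>a. Poly_Mapping.single a 1) ` exponents_le n d)"
    using p unfolding polys_deg_le_def by (intro span_sum span_scale span_base) auto
  finally show "p \<in> span ((\<lambda>a. Poly_Mapping.single a 1) ` exponents_le n d)" .
qed

lemma card_independent_polys_deg_le:
  assumes "independent S" "S \<subseteq> polys_deg_le n d"
  shows "card S \<le> (n + d) choose n"
proof -
  let ?M = "(\<lambda>a. Poly_Mapping.single a (1::real)) ` exponents_le n d"
  have "S \<subseteq> span ?M"
    using assms(2) polys_deg_le_subset_span by (rule order_trans)
  then have "card S \<le> card ?M"
    using independent_span_bound[OF finite_imageI[OF finite_exponents_le] assms(1)] by simp
  also have "\<dots> \<le> card (exponents_le n d)"
    by (rule card_image_le[OF finite_exponents_le])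
  also have "\<dots> \<le> (n + d) choose n"
    by (rule card_exponents_le)
  finally show ?thesis .
qed

section \<open>One step of normalized VCA\<close>

lemma evalmat_dims [simp]:
  "dim_row (evalmat H X) = length X" "dim_col (evalmat H X) = length H"
  unfolding evalmat_def by auto

lemma index_evalmat:
  "k < length X \<Longrightarrow> j < length H \<Longrightarrow> evalmat H X $$ (k, j) = peval (H ! j) (X ! k)"
  unfolding evalmat_def by simp

lemma peval_lincomb_col:
  assumes "dim_row V = length C" "a < dim_col V" "k < length X"
  shows "peval (lincomb C (col V a)) (X ! k) = (evalmat C X * V) $$ (k, a)"
proof -
  have "(evalmat C X * V) $$ (k, a) = (\<Sum>j<length C. evalmat C X $$ (k, j) * V $$ (j, a))"
    by (subst index_mult_mat_sum) (use assms in auto)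
  also have "\<dots> = (\<Sum>j<length C. col V a $ j * peval (C ! j) (X ! k))"
    by (rule sum.cong) (use assms in \<open>auto simp: index_evalmat\<close>)
  finally show ?thesis by (simp add: peval_lincomb)
qed

lemma eval_inner_lincomb_col:
  assumes "dim_row V = length C" "a < dim_col V" "b < dim_col V"
  shows "eval_inner X (lincomb C (col V a)) (lincomb C (col V b))
    = (transpose_mat (evalmat C X * V) * (evalmat C X * V)) $$ (a, b)"
proof -
  have "(transpose_mat (evalmat C X * V) * (evalmat C X * V)) $$ (a, b)
      = (\<Sum>k<length X. (evalmat C X * V) $$ (k, a) * (evalmat C X * V) $$ (k, b))"
    by (subst index_mult_mat_sum) (use assms in \<open>auto intro!: sum.cong\<close>)
  also have "\<dots> = eval_inner X (lincomb C (col V a)) (lincomb C (col V b))"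
    unfolding eval_inner_def by (rule sum.cong) (use assms in \<open>auto simp: peval_lincomb_col\<close>)
  finally show ?thesis by simp
qed

lemma vca_split_gram_diagonal:
  assumes "vca_split Nf X eps C Ft Gt" and Nf: "Nf C \<in> carrier_mat (length C) (length C)"
  obtains w where
    "\<And>i j. i < length Ft \<Longrightarrow> j < length Ft \<Longrightarrow>
      eval_inner X (Ft ! i) (Ft ! j) = (if i = j then w i else 0)"
    "\<And>i. i < length Ft \<Longrightarrow> eps < sqrt (w i)"
proof -
  from assms(1) obtain V lam where V: "V \<in> carrier_mat (length C) (length lam)"
    and eq: "transpose_mat (evalmat C X) * evalmat C X * V
      = Nf C * V * mat (length lam) (length lam) (\<lambda>(i, j). if i = j then lam ! i else 0)"
    and nor: "transpose_mat V * Nf C * V = 1\<^sub>m (length lam)"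
    and Ft: "Ft = [lincomb C (col V i). i \<leftarrow> [0..<length lam], sqrt (lam ! i) > eps]"
    unfolding vca_split_def by blast
  let ?E = "evalmat C X"
  let ?Lam = "mat (length lam) (length lam) (\<lambda>(i, j). if i = j then lam ! i else (0::real))"
  have dims: "dim_row V = length C" "dim_col V = length lam"
    "dim_row (Nf C) = length C" "dim_col (Nf C) = length C"
    using V Nf by auto
  \<comment> \<open>The normalization \<open>V\<^sup>T N V = I\<close> turns the eigenproblem
    into \<open>(C(X) V)\<^sup>T (C(X) V) = \<Lambda>\<close>.\<close>
  have "transpose_mat (?E * V) * (?E * V) = transpose_mat V * (transpose_mat ?E * ?E * V)"
    using dims by (simp add: transpose_mult' mult_mat_assoc)
  also have "\<dots> = (transpose_mat V * Nf C * V) * ?Lam"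
    unfolding eq using dims by (simp add: mult_mat_assoc)
  finally have gram: "transpose_mat (?E * V) * (?E * V) = ?Lam"
    unfolding nor by simp
  define idx where "idx = filter (\<lambda>i. eps < sqrt (lam ! i)) [0..<length lam]"
  have "[lincomb C (col V i). i \<leftarrow> xs, sqrt (lam ! i) > eps]
      = map (\<lambda>i. lincomb C (col V i)) (filter (\<lambda>i. eps < sqrt (lam ! i)) xs)" for xs
    by (induction xs) auto
  then have Ft_idx: "Ft = map (\<lambda>i. lincomb C (col V i)) idx"
    unfolding Ft idx_def .
  have idx: "idx ! i < length lam" "eps < sqrt (lam ! (idx ! i))" if "i < length idx" for i
    using nth_mem[OF that] unfolding idx_def by auto
  show ?thesis
  proof
    fix i j assume "i < length Ft" "j < length Ft"
    moreover have "distinct idx" unfolding idx_def by simp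
    ultimately show "eval_inner X (Ft ! i) (Ft ! j) = (if i = j then lam ! (idx ! i) else 0)"
      using idx dims unfolding Ft_idx by (simp add: eval_inner_lincomb_col gram nth_eq_iff_index_eq)
  next
    fix i assume "i < length Ft"
    then show "eps < sqrt (lam ! (idx ! i))" using idx unfolding Ft_idx by simp
  qed
qed

lemma vca_split_in_span: "vca_split Nf X eps C Ft Gt \<Longrightarrow> set Ft \<subseteq> span (set C)"
  unfolding vca_split_def using lincomb_in_span by (auto simp only: set_concat set_map) auto

lemma vca_split_orthogonal:
  assumes "vca_split Nf X eps C Ft Gt" "Nf C \<in> carrier_mat (length C) (length C)"
    and "i < length Ft" "j < length Ft" "i \<noteq> j"
  shows "eval_inner X (Ft ! i) (Ft ! j) = 0"
  using vca_split_gram_diagonal[OF assms(1,2)] assms(3-5) by metis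

lemma vca_split_norm_pos:
  assumes "vca_split Nf X eps C Ft Gt" "Nf C \<in> carrier_mat (length C) (length C)"
    and "0 \<le> eps" "p \<in> set Ft"
  shows "0 < eval_inner X p p"
proof -
  obtain w where gram: "\<And>i j. i < length Ft \<Longrightarrow> j < length Ft \<Longrightarrow>
      eval_inner X (Ft ! i) (Ft ! j) = (if i = j then w i else 0)"
    and pos: "\<And>i. i < length Ft \<Longrightarrow> eps < sqrt (w i)"
    using vca_split_gram_diagonal[OF assms(1,2)] by blast
  obtain i where i: "i < length Ft" "p = Ft ! i"
    using assms(4) by (auto simp: in_set_conv_nth)
  then have "0 < sqrt (w i)" using pos[of i] assms(3) by linarith
  then show ?thesis using gram i by simp
qed

lemma length_Cset [simp]: "length (Cset X Fall Cp) = length Cp"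
  unfolding Cset_def Let_def by simp

lemma nth_Cset:
  "j < length Cp \<Longrightarrow>
    Cset X Fall Cp ! j = Cp ! j - lincomb Fall (col (pinv (evalmat Fall X) * evalmat Cp X) j)"
  unfolding Cset_def Let_def lincombs_def by simp

lemma Cset_subset_span: "set (Cset X Fall Cp) \<subseteq> span (set Cp \<union> set Fall)"
proof
  fix c assume "c \<in> set (Cset X Fall Cp)"
  then obtain j where j: "j < length Cp" "c = Cset X Fall Cp ! j"
    by (auto simp: in_set_conv_nth)
  have "lincomb Fall (col (pinv (evalmat Fall X) * evalmat Cp X) j) \<in> span (set Cp \<union> set Fall)"
    using lincomb_in_span span_mono[of "set Fall" "set Cp \<union> set Fall"] by blast
  moreover have "Cp ! j \<in> span (set Cp \<union> set Fall)"
    using j by (intro span_base) simp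
  ultimately show "c \<in> span (set Cp \<union> set Fall)"
    using j by (simp add: nth_Cset span_diff)
qed

lemma eval_inner_Cset:
  assumes "f \<in> set Fall" "c \<in> set (Cset X Fall Cp)"
  shows "eval_inner X f c = 0"
proof -
  obtain l where l: "l < length Fall" "f = Fall ! l" using assms(1) by (auto simp: in_set_conv_nth)
  obtain j where j: "j < length Cp" "c = Cset X Fall Cp ! j" using assms(2) by (auto simp: in_set_conv_nth)
  define A where "A = evalmat Fall X"
  define E where "E = evalmat Cp X"
  define W where "W = pinv A * E"
  have dims: "dim_row W = length Fall" "dim_col W = length Cp"
    unfolding W_def E_def A_def using pinv_carrier[of "evalmat Fall X"] by auto
  have "peval c (X ! k) = (E - A * W) $$ (k, j)" if k: "k < length X" for k
    using k j dims
    by (simp add: nth_Cset linear_diff[OF linear_peval] peval_lincomb_col A_def E_def W_def index_evalmat)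
  then have "eval_inner X f c = (\<Sum>k<length X. transpose_mat A $$ (l, k) * (E - A * W) $$ (k, j))"
    unfolding eval_inner_def using l by (auto simp: A_def index_evalmat intro!: sum.cong)
  also have "\<dots> = (transpose_mat A * (E - A * W)) $$ (l, j)"
    by (subst index_mult_mat_sum) (use l j dims in \<open>auto simp: A_def E_def\<close>)
  \<comment> \<open>Projecting out the column space of \<open>A = F(X)\<close> leaves a residual
    orthogonal to it, as \<open>A\<^sup>T A A\<^sup>+ = A\<^sup>T\<close>.\<close>
  also have "transpose_mat A * (E - A * W) = transpose_mat A * E - transpose_mat A * A * pinv A * E"
    using dims pinv_carrier[of A] unfolding W_def by (simp add: mult_minus_distrib_mat' mult_mat_assoc A_def E_def)
  also have "\<dots> = transpose_mat A * E - transpose_mat A * E"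
    by (simp add: transpose_mult_pinv)
  also have "(\<dots>) $$ (l, j) = 0"
    using l j by (simp add: A_def E_def)
  finally show ?thesis .
qed

lemma eval_inner_span_Cset:
  "f \<in> set Fall \<Longrightarrow> q \<in> span (set (Cset X Fall Cp)) \<Longrightarrow> eval_inner X f q = 0"
  by (rule linear_eq_0_on_span[OF linear_eval_inner]) (rule eval_inner_Cset)

lemma Cpre_1_subset_polys_deg_le: "set (Cpre n F1 Fprev 1) \<subseteq> polys_deg_le n 1"
  using pvar_mem_polys_deg_le by (auto simp: Cpre_def)

lemma Cpre_subset_polys_deg_le:
  assumes "1 < t" "set F1 \<subseteq> polys_deg_le n 1" "set Fprev \<subseteq> polys_deg_le n (t - 1)"
  shows "set (Cpre n F1 Fprev t) \<subseteq> polys_deg_le n t"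
proof -
  have "p * q \<in> polys_deg_le n t" if "p \<in> set F1" "q \<in> set Fprev" for p q
    using times_mem_polys_deg_le[of p n 1 q "t - 1"] assms that by auto
  then show ?thesis using assms(1) by (auto simp: Cpre_def)
qed

section \<open>Runs of normalized VCA\<close>

locale vca_execution =
  fixes Nf :: "mpoly list \<Rightarrow> real mat" and n :: nat and X :: "point list" and eps :: real
    and F G :: "nat \<Rightarrow> mpoly list"
  assumes run: "vca_run Nf n X eps F G"
    and eps_nonneg: "0 \<le> eps"
    and Nf_carrier: "\<And>H. Nf H \<in> carrier_mat (length H) (length H)"
begin

abbreviation F_below :: "nat \<Rightarrow> mpoly list" where
  "F_below t \<equiv> concat (map F [0..<t])"

abbreviation candidates :: "nat \<Rightarrow> mpoly list" where
  "candidates t \<equiv> Cset X (F_below t) (Cpre n (F 1) (F (t - 1)) t)"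

lemma F_0E:
  obtains m where "m \<noteq> 0" "F 0 = [pconst m]"
  using run unfolding vca_run_def by blast

lemma vca_split_F:
  assumes "1 \<le> t" "F t \<noteq> []"
  shows "vca_split Nf X eps (candidates t) (F t) (G t)"
proof -
  from run obtain T
    where split: "\<And>t. 1 \<le> t \<Longrightarrow> t \<le> T \<Longrightarrow> vca_split Nf X eps (candidates t) (F t) (G t)"
      and beyond: "\<And>t. T < t \<Longrightarrow> F t = []"
    unfolding vca_run_def by blast
  have "t \<le> T" using beyond[of t] assms(2) by (cases "t \<le> T") auto
  then show ?thesis using split assms(1) by blast
qed

lemma F_subset_span: "1 \<le> t \<Longrightarrow> set (F t) \<subseteq> span (set (candidates t))"
  using vca_split_in_span[OF vca_split_F] by (cases "F t = []") auto

lemma F_norm_pos: "1 \<le> t \<Longrightarrow> p \<in> set (F t) \<Longrightarrow> 0 < eval_inner X p p"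
  using vca_split_norm_pos[OF vca_split_F Nf_carrier eps_nonneg] by (cases "F t = []") auto

lemma F_orthogonal_earlier:
  assumes "s < t" "p \<in> set (F s)" "q \<in> set (F t)"
  shows "eval_inner X p q = 0"
proof (rule eval_inner_span_Cset)
  show "p \<in> set (F_below t)" using assms(1,2) by auto
  show "q \<in> span (set (candidates t))" using F_subset_span[of t] assms(1,3) by auto
qed

lemma F_orthogonal:
  assumes i: "i < length (F s)" and j: "j < length (F t)" and ne: "(s, i) \<noteq> (t, j)"
  shows "eval_inner X (F s ! i) (F t ! j) = 0"
proof (cases s t rule: linorder_cases)
  case less
  then show ?thesis using F_orthogonal_earlier i j by simp
next
  case equal
  have "1 \<le> t"
  proof (rule ccontr)
    assume "\<not> 1 \<le> t"
    then have "t = 0" by simp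
    moreover obtain m where "F 0 = [pconst m]" by (rule F_0E)
    ultimately show False using i j ne equal by simp
  qed
  moreover have "F t \<noteq> []" using j by auto
  ultimately show ?thesis
    using vca_split_orthogonal[OF vca_split_F Nf_carrier] i j ne equal by simp
next
  case greater
  then have "eval_inner X (F t ! j) (F s ! i) = 0" using F_orthogonal_earlier i j by simp
  then show ?thesis by (metis eval_inner_commute)
qed

lemma F_disjoint:
  assumes "s \<noteq> t"
  shows "set (F s) \<inter> set (F t) = {}"
proof -
  have earlier: "set (F s) \<inter> set (F t) = {}" if "s < t" for s t
  proof (rule equals0I)
    fix p assume "p \<in> set (F s) \<inter> set (F t)"
    then have "p \<in> set (F s)" "p \<in> set (F t)" by auto
    then have "eval_inner X p p = 0" using F_orthogonal_earlier[OF that] by blast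
    moreover have "0 < eval_inner X p p" using F_norm_pos[of t p] that \<open>p \<in> set (F t)\<close> by simp
    ultimately show False by simp
  qed
  consider "s < t" | "t < s" using assms by linarith
  then show ?thesis by cases (use earlier[of s t] earlier[of t s] in auto)
qed

lemma F_subset_polys_deg_le: "set (F t) \<subseteq> polys_deg_le n t"
proof (induction t rule: less_induct)
  case (less t)
  show ?case
  proof (cases "t = 0")
    case True
    obtain m where "F 0 = [pconst m]" by (rule F_0E)
    then show ?thesis using True pconst_mem_polys_deg_le by simp
  next
    case False
    have "set (F_below t) \<subseteq> polys_deg_le n t"
    proof
      fix p assume "p \<in> set (F_below t)"
      then obtain s where "s < t" "p \<in> set (F s)" by auto
      then show "p \<in> polys_deg_le n t" using less.IH[of s] polys_deg_le_mono[of s t n] by auto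
    qed
    moreover have "set (Cpre n (F 1) (F (t - 1)) t) \<subseteq> polys_deg_le n t"
    proof (cases "t = 1")
      case True
      then show ?thesis using Cpre_1_subset_polys_deg_le by simp
    next
      case False
      then show ?thesis
        using \<open>t \<noteq> 0\<close> less.IH[of 1] less.IH[of "t - 1"] by (intro Cpre_subset_polys_deg_le) auto
    qed
    ultimately have "span (set (Cpre n (F 1) (F (t - 1)) t) \<union> set (F_below t)) \<subseteq> polys_deg_le n t"
      by (intro span_minimal[OF _ subspace_polys_deg_le]) blast
    then have "span (set (candidates t)) \<subseteq> polys_deg_le n t"
      using Cset_subset_span by (intro span_minimal[OF _ subspace_polys_deg_le]) blast
    then show ?thesis using F_subset_span[of t] False by auto
  qed
qed

lemma card_F_upto_le: "card (\<Union>t\<le>\<tau>. set (F t)) \<le> (n + \<tau>) choose n"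
proof -
  obtain m where m: "m \<noteq> 0" "F 0 = [pconst m]" by (rule F_0E)
  show ?thesis
  proof (cases "X = []")
    case True
    then have none: "p \<notin> set (F t)" if "1 \<le> t" for p t
      using F_norm_pos[OF that, of p] by (auto simp: eval_inner_def)
    have "(\<Union>t\<le>\<tau>. set (F t)) \<subseteq> {pconst m}"
    proof (rule UN_least)
      fix t show "set (F t) \<subseteq> {pconst m}" using m none[of t] by (cases "t = 0") auto
    qed
    then have "card (\<Union>t\<le>\<tau>. set (F t)) \<le> 1"
      using card_mono[of "{pconst m}"] by simp
    also have "1 \<le> (n + \<tau>) choose n" by (simp add: Suc_leI)
    finally show ?thesis .
  next
    case False
    have orth: "eval_inner X p q = 0"
      if p: "p \<in> set (F s)" and q: "q \<in> set (F t)" and "p \<noteq> q" for p q s t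
    proof -
      obtain i j where "i < length (F s)" "p = F s ! i" "j < length (F t)" "q = F t ! j"
        using p q by (auto simp: in_set_conv_nth)
      then show ?thesis using F_orthogonal[of i s j t] \<open>p \<noteq> q\<close> by auto
    qed
    have pos: "0 < eval_inner X p p" if "p \<in> set (F t)" for p t
      using that m False F_norm_pos[of t p] by (cases "t = 0") (auto simp: eval_inner_pconst)
    have "independent (\<Union>t\<le>\<tau>. set (F t))"
    proof (rule independent_if_pairwise_orthogonal[OF linear_eval_inner])
      fix p q assume "p \<in> (\<Union>t\<le>\<tau>. set (F t))" "q \<in> (\<Union>t\<le>\<tau>. set (F t))" "p \<noteq> q"
      then show "eval_inner X p q = 0" using orth by blast
    next
      fix p assume "p \<in> (\<Union>t\<le>\<tau>. set (F t))"
      then obtain t where "p \<in> set (F t)" by blast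
      then show "eval_inner X p p \<noteq> 0" using pos[of p t] by simp
    qed
    moreover have "(\<Union>t\<le>\<tau>. set (F t)) \<subseteq> polys_deg_le n \<tau>"
    proof (rule UN_least)
      fix t assume "t \<in> {..\<tau>}"
      then show "set (F t) \<subseteq> polys_deg_le n \<tau>"
        using F_subset_polys_deg_le[of t] polys_deg_le_mono[of t \<tau> n] by auto
    qed
    ultimately show ?thesis by (rule card_independent_polys_deg_le)
  qed
qed

end

theorem lemma4:
  fixes n :: nat and X :: "point list" and eps :: real
    and F G :: "nat \<Rightarrow> mpoly list" and Nf :: "mpoly list \<Rightarrow> real mat"
  assumes "distinct X"
    and "\<forall>x\<in>set X. \<forall>j\<ge>n. x j = 0"
    and "eps \<ge> 0"
    and "Nf = Nc \<or> Nf = Ng n X"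
    and "vca_run Nf n X eps F G"
  shows "\<forall>\<tau>::nat. card (\<Union>t\<le>\<tau>. set (F t)) = (\<Sum>t\<le>\<tau>. card (set (F t)))
              \<and> (\<Sum>t\<le>\<tau>. card (set (F t))) \<le> (n + \<tau>) choose n"
proof -
  interpret vca_execution Nf n X eps F G
    using assms(3-5) by unfold_locales (auto simp: Nc_def Ng_def)
  have "card (\<Union>t\<le>\<tau>. set (F t)) = (\<Sum>t\<le>\<tau>. card (set (F t)))" for \<tau>
    by (rule card_UN_disjoint) (use F_disjoint in auto)
  then show ?thesis using card_F_upto_le by simp
qed

end
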